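(* In the hexagonal three-direction setting with the random model described in the context, let $k\ge1$, let $X=\sum_{r\in R}X_r$ be the number of zero measurements and $N_R^0=\mathbb{E}[X]=\sum_{r\in R}(1-|r|/|C|)^k$. Set $\overline{p}_d=1-\min_{r\in R}\frac{|r|}{|C|}=1-\frac{2(d+1)}{3d^2+1}$. Then for every $\delta>0$, \[ \Pr\big[|X-N_R^0|\ge\delta\big]\le 2\exp\Big(-\frac{1-\overline{p}_d^{\,2}}{18\,(1-\overline{p}_d^{\,2k})}\,\delta^2\Big). \]
   Context: Hexagonal setting. Let $d\ge 3$ be an odd integer. The set of cells is $C=\{(i_1,i_2)\in\mathbb{Z}^2 : |i_1|\le (d-1)/2,\ |i_2|\le (d-1)/2,\ |i_1+i_2|\le (d-1)/2\}$ (the cell centers are $i_1 d^1+i_2 d^2$ with $d^1=\tfrac12(\sqrt3,1)$, $d^2=(0,1)$, forming a hexagon), so $|C|=(3d^2+1)/4$. There are three directions of projection rays: $R_1$ consists of the $d$ rays $\{(i_1,i_2)\in C: i_1=a\}$, $R_2$ of the $d$ rays $\{(i_1,i_2)\in C: i_2=a\}$, and $R_3$ of the $d$ rays $\{(i_1,i_2)\in C: i_1+i_2=a\}$, for $a\in\{-(d-1)/2,\dots,(d-1)/2\}$; a ray is identified with the set of cells it meets, $|r|$ denotes its number of cells, and $R=R_1\cup R_2\cup R_3$, $|R|=3d$. Each cell $c$ lies on exactly one ray $r_i(c)\in R_i$ for each $i=1,2,3$. Random model: $k$ cells are drawn independently and uniformly from $C$ (with replacement; a cell may be drawn several times). For $r\in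 R$, $X_r\in\{0,1\}$ equals $1$ (a "zero measurement") iff none of the drawn cells lies on $r$. *)

theory Defs
  imports "HOL-Probability.Probability"
begin

definition hex_half :: "nat \<Rightarrow> int" where
  "hex_half d = (int d - 1) div 2"

definition hex_cells :: "nat \<Rightarrow> (int \<times> int) set" where
  "hex_cells d = {(i1, i2). \<bar>i1\<bar> \<le> hex_half d \<and> \<bar>i2\<bar> \<le> hex_half d \<and> \<bar>i1 + i2\<bar> \<le> hex_half d}"

definition hex_ray :: "nat \<Rightarrow> nat \<Rightarrow> int \<Rightarrow> (int \<times> int) set" where
  "hex_ray d j a = {c \<in> hex_cells d.
     (if j = 1 then fst c else if j = 2 then snd c else fst c + snd c) = a}"

definition hex_rays :: "nat \<Rightarrow> (nat \<times> int) set" where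
  "hex_rays d = {1, 2, 3} \<times> {- hex_half d .. hex_half d}"

definition draw_pmf :: "nat \<Rightarrow> nat \<Rightarrow> (nat \<Rightarrow> int \<times> int) pmf" where
  "draw_pmf d k = Pi_pmf {0..<k} (0, 0) (\<lambda>_. pmf_of_set (hex_cells d))"

definition zero_meas :: "nat \<Rightarrow> nat \<Rightarrow> nat \<times> int \<Rightarrow> (nat \<Rightarrow> int \<times> int) \<Rightarrow> real" where
  "zero_meas d k r \<omega> = (if \<forall>i<k. \<omega> i \<notin> hex_ray d (fst r) (snd r) then 1 else 0)"

definition zero_count :: "nat \<Rightarrow> nat \<Rightarrow> (nat \<Rightarrow> int \<times> int) \<Rightarrow> real" where
  "zero_count d k \<omega> = (\<Sum>r\<in>hex_rays d. zero_meas d k r \<omega>)"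

definition expected_zeros :: "nat \<Rightarrow> nat \<Rightarrow> real" where
  "expected_zeros d k = (\<Sum>r\<in>hex_rays d.
      (1 - real (card (hex_ray d (fst r) (snd r))) / real (card (hex_cells d))) ^ k)"

definition pbar :: "nat \<Rightarrow> real" where
  "pbar d = 1 - Min ((\<lambda>r. real (card (hex_ray d (fst r) (snd r))) / real (card (hex_cells d))) ` hex_rays d)"

end

theory Submission
  imports Defs
begin

(*
  The argument works for any finite set of cells C and family of rays R in which every cell
  lies on exactly t rays; this is the locale ray_system.  Draw the k cells one at a time.
  If A is the set of rays still missed, the next cell c leaves the rays survivors A c, and
  the centred count  zeros A (m+1) - mean A (m+1)  splits into the centred count for
  survivors A c after m draws plus a drift term depending on c only.  The drift has mean
  zero over a uniform cell and is bounded by t * p^m, where p bounds every miss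
  probability 1 - |r|/|C|.  Hoeffding's lemma and induction over the draws bound the moment
  generating function by  exp (l^2 t^2/2 * sum_{j<m} p^(2j)),  and a Chernoff bound for
  both signs gives  P(|X - E X| >= delta) <= 2 exp (-delta^2 / (2 t^2 sum_{j<k} p^(2j))).
*)

locale ray_system =
  fixes C :: "'c set" and R :: "'r set" and ray :: "'r \<Rightarrow> 'c set" and t :: nat
  assumes finite_cells: "finite C"
    and cells_nonempty: "C \<noteq> {}"
    and finite_rays: "finite R"
    and ray_subset: "r \<in> R \<Longrightarrow> ray r \<subseteq> C"
    and rays_through: "c \<in> C \<Longrightarrow> card {r \<in> R. c \<in> ray r} = t"
begin

definition miss :: "'r \<Rightarrow> real" where
  "miss r = 1 - real (card (ray r)) / real (card C)"

definition zeros :: "'r set \<Rightarrow> nat \<Rightarrow> (nat \<Rightarrow> 'c) \<Rightarrow> real" where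
  "zeros A m \<omega> = (\<Sum>r\<in>A. if \<forall>i<m. \<omega> i \<notin> ray r then 1 else 0)"

definition mean :: "'r set \<Rightarrow> nat \<Rightarrow> real" where
  "mean A m = (\<Sum>r\<in>A. miss r ^ m)"

definition survivors :: "'r set \<Rightarrow> 'c \<Rightarrow> 'r set" where
  "survivors A c = {r \<in> A. c \<notin> ray r}"

text \<open>Change of the conditional expectation caused by drawing the cell \<open>c\<close>.\<close>
definition drift :: "'r set \<Rightarrow> nat \<Rightarrow> 'c \<Rightarrow> real" where
  "drift A m c = mean (survivors A c) m - mean A (Suc m)"

text \<open>Independent uniform draws; \<open>z\<close> fills the unused coordinates.\<close>
definition draws :: "'c \<Rightarrow> nat \<Rightarrow> (nat \<Rightarrow> 'c) pmf" where
  "draws z m = Pi_pmf {0..<m} z (\<lambda>_. pmf_of_set C)"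

lemma card_cells_pos: "card C > 0"
  using finite_cells cells_nonempty by (simp add: card_gt_0_iff)

lemma miss_bounds:
  assumes "r \<in> R"
  shows "0 \<le> miss r" "miss r \<le> 1"
  using card_mono[OF finite_cells ray_subset[OF assms]] card_cells_pos
  by (simp_all add: miss_def field_simps)

text \<open>Double counting of incidences: each cell lies on \<open>t\<close> rays.\<close>
lemma sum_card_rays: "(\<Sum>r\<in>R. card (ray r)) = t * card C"
proof -
  have "(\<Sum>r\<in>R. card (ray r)) = (\<Sum>r\<in>R. \<Sum>c\<in>C. of_bool (c \<in> ray r))"
    using ray_subset finite_cells by (intro sum.cong) (auto simp: Int_absorb1 Int_def[symmetric])
  also have "\<dots> = (\<Sum>c\<in>C. \<Sum>r\<in>R. of_bool (c \<in> ray r))"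
    by (rule sum.swap)
  also have "\<dots> = t * card C"
    using finite_rays rays_through by (simp add: Int_def)
  finally show ?thesis .
qed

lemma sum_hit_prob: "(\<Sum>r\<in>R. 1 - miss r) = t"
proof -
  have "(\<Sum>r\<in>R. 1 - miss r) = real (\<Sum>r\<in>R. card (ray r)) / real (card C)"
    by (simp add: miss_def sum_divide_distrib)
  then show ?thesis
    using card_cells_pos by (simp add: sum_card_rays)
qed

lemma zeros_draw_last:
  assumes "finite A"
  shows "zeros A (Suc m) (fun_upd \<omega> m c) = zeros (survivors A c) m \<omega>"
proof -
  have "(\<forall>i<Suc m. (fun_upd \<omega> m c) i \<notin> ray r) \<longleftrightarrow> c \<notin> ray r \<and> (\<forall>i<m. \<omega> i \<notin> ray r)" for r
    by (auto simp: less_Suc_eq)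
  then have "zeros A (Suc m) (fun_upd \<omega> m c)
      = (\<Sum>r\<in>A. if c \<notin> ray r then (if \<forall>i<m. \<omega> i \<notin> ray r then 1 else 0) else 0)"
    unfolding zeros_def by (intro sum.cong) auto
  also have "\<dots> = zeros (survivors A c) m \<omega>"
    using assms by (simp add: zeros_def survivors_def sum.inter_filter)
  finally show ?thesis .
qed

lemma drift_eq:
  assumes "finite A"
  shows "drift A m c = (\<Sum>r\<in>A. miss r ^ m * (1 - miss r)) - (\<Sum>r\<in>A. of_bool (c \<in> ray r) * miss r ^ m)"
proof -
  have "mean (survivors A c) m = (\<Sum>r\<in>A. if c \<notin> ray r then miss r ^ m else 0)"
    using assms by (simp add: mean_def survivors_def sum.inter_filter)
  also have "\<dots> = (\<Sum>r\<in>A. miss r ^ m - of_bool (c \<in> ray r) * miss r ^ m)"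
    by (intro sum.cong) auto
  finally have "mean (survivors A c) m = \<dots>" .
  then show ?thesis
    by (simp add: drift_def mean_def sum_subtractf algebra_simps)
qed

text \<open>The drift is small: both terms of \<open>drift_eq\<close> lie in \<open>[0, t p^m]\<close>.\<close>
lemma drift_bounds:
  fixes p :: real
  assumes A: "A \<subseteq> R" and c: "c \<in> C"
    and p: "0 \<le> p" "\<And>r. r \<in> R \<Longrightarrow> miss r \<le> p"
  shows "\<bar>drift A m c\<bar> \<le> t * p ^ m"
proof -
  have fA: "finite A" using finite_subset[OF A finite_rays] .
  have pow: "0 \<le> miss r ^ m" "miss r ^ m \<le> p ^ m" if "r \<in> R" for r
    using miss_bounds[OF that] p(2)[OF that] by (auto intro: power_mono)
  have hit: "0 \<le> 1 - miss r" if "r \<in> R" for r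
    using miss_bounds[OF that] by simp
  have "(\<Sum>r\<in>A. miss r ^ m * (1 - miss r)) \<le> (\<Sum>r\<in>A. p ^ m * (1 - miss r))"
    using A pow hit by (intro sum_mono mult_right_mono) auto
  also have "\<dots> \<le> (\<Sum>r\<in>R. p ^ m * (1 - miss r))"
    using A hit p(1) by (intro sum_mono2 finite_rays) auto
  also have "\<dots> = t * p ^ m"
    by (simp add: sum_distrib_left[symmetric] sum_hit_prob)
  finally have up: "(\<Sum>r\<in>A. miss r ^ m * (1 - miss r)) \<le> t * p ^ m" .
  have "(\<Sum>r\<in>A. of_bool (c \<in> ray r) * miss r ^ m) \<le> (\<Sum>r\<in>A. of_bool (c \<in> ray r) * p ^ m)"
    using A pow by (intro sum_mono mult_left_mono) auto
  also have "\<dots> \<le> (\<Sum>r\<in>R. of_bool (c \<in> ray r) * p ^ m)"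
    using A p(1) by (intro sum_mono2 finite_rays) auto
  also have "\<dots> = t * p ^ m"
    using finite_rays rays_through[OF c] by (simp add: sum_distrib_right[symmetric] Int_def)
  finally have down: "(\<Sum>r\<in>A. of_bool (c \<in> ray r) * miss r ^ m) \<le> t * p ^ m" .
  have "0 \<le> (\<Sum>r\<in>A. miss r ^ m * (1 - miss r))" "0 \<le> (\<Sum>r\<in>A. of_bool (c \<in> ray r) * miss r ^ m)"
    using A pow hit by (auto intro!: sum_nonneg)
  with up down show ?thesis
    unfolding drift_eq[OF fA] by linarith
qed

lemma sum_drift:
  assumes A: "A \<subseteq> R"
  shows "(\<Sum>c\<in>C. drift A m c) = 0"
proof -
  have fA: "finite A" using finite_subset[OF A finite_rays] .
  have ray_card: "real (card (ray r)) = card C * (1 - miss r)" for r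
    using card_cells_pos by (simp add: miss_def)
  have "(\<Sum>c\<in>C. \<Sum>r\<in>A. of_bool (c \<in> ray r) * miss r ^ m)
      = (\<Sum>r\<in>A. (\<Sum>c\<in>C. of_bool (c \<in> ray r)) * miss r ^ m)"
    by (subst sum.swap) (simp add: sum_distrib_right)
  also have "\<dots> = (\<Sum>r\<in>A. real (card (ray r)) * miss r ^ m)"
    using A ray_subset finite_cells by (intro sum.cong) (auto simp: Int_absorb1 Int_def[symmetric])
  also have "\<dots> = card C * (\<Sum>r\<in>A. miss r ^ m * (1 - miss r))"
    by (simp add: ray_card sum_distrib_left mult_ac)
  finally show ?thesis
    by (simp add: drift_eq[OF fA] sum_subtractf)
qed

lemma set_pmf_cells: "set_pmf (pmf_of_set C) = C"
  using finite_cells cells_nonempty by simp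

text \<open>Hoeffding's lemma for the drift, a bounded variable with mean zero.\<close>
lemma drift_mgf:
  fixes p l s :: real
  assumes A: "A \<subseteq> R" and p: "0 \<le> p" "\<And>r. r \<in> R \<Longrightarrow> miss r \<le> p"
    and l: "l > 0" and s: "\<bar>s\<bar> = 1"
  shows "(\<integral>\<^sup>+c. ennreal (exp (l * (s * drift A m c))) \<partial>pmf_of_set C)
      \<le> ennreal (exp (l\<^sup>2 * (real t)\<^sup>2 / 2 * (p\<^sup>2) ^ m))"
proof -
  let ?b = "t * p ^ m"
  interpret bounded: interval_bounded_random_variable "measure_pmf (pmf_of_set C)"
      "\<lambda>c. s * drift A m c" "- ?b" ?b
  proof
    have "\<bar>s * drift A m c\<bar> \<le> ?b" if "c \<in> C" for c
      using drift_bounds[OF A that p] s by (simp add: abs_mult)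
    then show "AE c in measure_pmf (pmf_of_set C). s * drift A m c \<in> {- ?b..?b}"
      by (auto simp: AE_measure_pmf_iff set_pmf_cells abs_le_iff minus_le_iff)
  qed simp
  have "measure_pmf.expectation (pmf_of_set C) (\<lambda>c. s * drift A m c)
      = (\<Sum>c\<in>C. s * drift A m c) / card C"
    using finite_cells cells_nonempty by (intro integral_pmf_of_set)
  also have "\<dots> = 0"
    using sum_drift[OF A] by (simp add: sum_distrib_left[symmetric])
  finally have "(\<integral>\<^sup>+c. ennreal (exp (l * (s * drift A m c))) \<partial>pmf_of_set C)
      \<le> ennreal (exp (l\<^sup>2 * (?b - - ?b)\<^sup>2 / 8))"
    by (rule bounded.Hoeffdings_lemma_nn_integral_0[OF l])
  also have "l\<^sup>2 * (?b - - ?b)\<^sup>2 / 8 = l\<^sup>2 * (real t)\<^sup>2 / 2 * (p\<^sup>2) ^ m"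
    by (simp add: power_mult_distrib power_mult[symmetric] mult.commute[of 2] power2_eq_square)
  finally show ?thesis .
qed

lemma draws_Suc:
  "draws z (Suc m) = map_pmf (\<lambda>(c, \<omega>). fun_upd \<omega> m c) (pair_pmf (pmf_of_set C) (draws z m))"
  unfolding draws_def atLeast0_lessThan_Suc by (rule Pi_pmf_insert) auto

lemma zeros_mgf:
  fixes p l s :: real
  assumes p: "0 \<le> p" "\<And>r. r \<in> R \<Longrightarrow> miss r \<le> p" and l: "l > 0" and s: "\<bar>s\<bar> = 1"
  shows "A \<subseteq> R \<Longrightarrow> (\<integral>\<^sup>+\<omega>. ennreal (exp (l * (s * (zeros A m \<omega> - mean A m)))) \<partial>draws z m)
      \<le> ennreal (exp (l\<^sup>2 * (real t)\<^sup>2 / 2 * (\<Sum>j<m. (p\<^sup>2) ^ j)))"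
proof (induction m arbitrary: A)
  case 0
  have "zeros A 0 \<omega> = mean A 0" for \<omega>
    by (simp add: zeros_def mean_def)
  then show ?case by simp
next
  case (Suc m)
  define E where "E = exp (l\<^sup>2 * (real t)\<^sup>2 / 2 * (\<Sum>j<m. (p\<^sup>2) ^ j))"
  have survivors_sub: "survivors A c \<subseteq> R" for c
    using Suc.prems by (auto simp: survivors_def)
  have split: "exp (l * (s * (zeros A (Suc m) (fun_upd \<omega> m c) - mean A (Suc m))))
      = exp (l * (s * (zeros (survivors A c) m \<omega> - mean (survivors A c) m))) * exp (l * (s * drift A m c))"
    for \<omega> c
    using finite_subset[OF Suc.prems finite_rays]
    by (simp add: zeros_draw_last drift_def algebra_simps flip: exp_add)
  have "(\<integral>\<^sup>+\<omega>. ennreal (exp (l * (s * (zeros A (Suc m) \<omega> - mean A (Suc m))))) \<partial>draws z (Suc m))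
      = (\<integral>\<^sup>+c. (\<integral>\<^sup>+\<omega>. ennreal (exp (l * (s * (zeros (survivors A c) m \<omega> - mean (survivors A c) m))))
          \<partial>draws z m) * ennreal (exp (l * (s * drift A m c))) \<partial>pmf_of_set C)"
    by (simp add: draws_Suc nn_integral_pair_pmf' case_prod_beta split ennreal_mult nn_integral_multc)
  also have "\<dots> \<le> (\<integral>\<^sup>+c. ennreal E * ennreal (exp (l * (s * drift A m c))) \<partial>pmf_of_set C)"
    using Suc.IH[OF survivors_sub] by (intro nn_integral_mono mult_right_mono) (auto simp: E_def)
  also have "\<dots> = ennreal E * (\<integral>\<^sup>+c. ennreal (exp (l * (s * drift A m c))) \<partial>pmf_of_set C)"
    by (simp add: nn_integral_cmult)
  also have "\<dots> \<le> ennreal E * ennreal (exp (l\<^sup>2 * (real t)\<^sup>2 / 2 * (p\<^sup>2) ^ m))"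
    by (intro mult_left_mono drift_mgf[OF Suc.prems p l s]) auto
  also have "\<dots> = ennreal (exp (l\<^sup>2 * (real t)\<^sup>2 / 2 * (\<Sum>j<Suc m. (p\<^sup>2) ^ j)))"
    by (simp add: E_def algebra_simps flip: ennreal_mult exp_add)
  finally show ?case .
qed

text \<open>One-sided Chernoff bound; \<open>s = \<plusminus>1\<close> selects the side.\<close>
lemma zeros_tail:
  fixes p l s \<delta> :: real
  assumes "0 \<le> p" "\<And>r. r \<in> R \<Longrightarrow> miss r \<le> p" "l > 0" "\<bar>s\<bar> = 1"
  shows "measure_pmf.prob (draws z m) {\<omega>. s * (zeros R m \<omega> - mean R m) \<ge> \<delta>}
      \<le> exp (l\<^sup>2 * (real t)\<^sup>2 / 2 * (\<Sum>j<m. (p\<^sup>2) ^ j) - l * \<delta>)"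
proof -
  have "ennreal (measure_pmf.prob (draws z m) {\<omega>. s * (zeros R m \<omega> - mean R m) \<ge> \<delta>})
      \<le> ennreal (exp (- l * \<delta>)) * (\<integral>\<^sup>+\<omega>. ennreal (exp (l * (s * (zeros R m \<omega> - mean R m)))) \<partial>draws z m)"
    using Chernoff_ineq_nn_integral_ge[OF \<open>l > 0\<close>, of UNIV "measure_pmf (draws z m)"]
    by (simp add: measure_pmf.emeasure_eq_measure)
  also have "\<dots> \<le> ennreal (exp (- l * \<delta>)) * ennreal (exp (l\<^sup>2 * (real t)\<^sup>2 / 2 * (\<Sum>j<m. (p\<^sup>2) ^ j)))"
    by (intro mult_left_mono zeros_mgf[OF assms]) auto
  finally show ?thesis
    by (simp add: ennreal_le_iff flip: ennreal_mult exp_add)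
qed

theorem zeros_concentration:
  fixes p \<delta> :: real
  assumes p: "0 \<le> p" "\<And>r. r \<in> R \<Longrightarrow> miss r \<le> p" and "k > 0" "t > 0" "\<delta> > 0"
  shows "measure_pmf.prob (draws z k) {\<omega>. \<bar>zeros R k \<omega> - mean R k\<bar> \<ge> \<delta>}
      \<le> 2 * exp (- \<delta>\<^sup>2 / (2 * (real t)\<^sup>2 * (\<Sum>j<k. (p\<^sup>2) ^ j)))"
proof -
  define S where "S = (\<Sum>j<k. (p\<^sup>2) ^ j)"
  have "(\<Sum>j\<in>{0}. (p\<^sup>2) ^ j) \<le> S"
    unfolding S_def using \<open>k > 0\<close> by (intro sum_mono2) auto
  then have S: "S \<ge> 1" by simp
  define l where "l = \<delta> / ((real t)\<^sup>2 * S)"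
  have l: "l > 0"
    using \<open>t > 0\<close> \<open>\<delta> > 0\<close> S by (simp add: l_def)
  have exponent: "l\<^sup>2 * (real t)\<^sup>2 / 2 * S - l * \<delta> = - \<delta>\<^sup>2 / (2 * (real t)\<^sup>2 * S)"
    using \<open>t > 0\<close> S by (simp add: l_def field_simps power2_eq_square)
  define B where "B s = {\<omega>. s * (zeros R k \<omega> - mean R k) \<ge> \<delta>}" for s :: real
  have tail: "measure_pmf.prob (draws z k) (B s) \<le> exp (- \<delta>\<^sup>2 / (2 * (real t)\<^sup>2 * S))" if "\<bar>s\<bar> = 1" for s
    using zeros_tail[OF p l that, of z k \<delta>] unfolding B_def S_def[symmetric] exponent .
  have "measure_pmf.prob (draws z k) {\<omega>. \<bar>zeros R k \<omega> - mean R k\<bar> \<ge> \<delta>}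
      \<le> measure_pmf.prob (draws z k) (B 1 \<union> B (- 1))"
    by (intro measure_pmf.finite_measure_mono) (auto simp: B_def)
  also have "\<dots> \<le> measure_pmf.prob (draws z k) (B 1) + measure_pmf.prob (draws z k) (B (- 1))"
    by (rule measure_Un_le) auto
  also have "\<dots> \<le> 2 * exp (- \<delta>\<^sup>2 / (2 * (real t)\<^sup>2 * S))"
    using tail[of 1] tail[of "- 1"] by simp
  finally show ?thesis unfolding S_def .
qed

end

lemma hex_half_odd:
  assumes "odd d" "d \<ge> 3"
  shows "hex_half d \<ge> 1" "real d = 2 * hex_half d + 1"
proof -
  obtain m where m: "d = 2 * m + 1" using assms(1) oddE by blast
  then have "hex_half d = int m" by (simp add: hex_half_def)
  with m assms(2) show "hex_half d \<ge> 1" "real d = 2 * hex_half d + 1" by auto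
qed

lemma finite_hex_cells: "finite (hex_cells d)"
proof (rule finite_subset)
  show "hex_cells d \<subseteq> {- hex_half d..hex_half d} \<times> {- hex_half d..hex_half d}"
    by (auto simp: hex_cells_def)
qed simp

lemma hex_ray_subset: "hex_ray d j a \<subseteq> hex_cells d"
  by (auto simp: hex_ray_def)

lemma hex_rays_through:
  assumes "c \<in> hex_cells d"
  shows "{r \<in> hex_rays d. c \<in> hex_ray d (fst r) (snd r)} = {(1, fst c), (2, snd c), (3, fst c + snd c)}"
  using assms by (cases c) (auto simp: hex_rays_def hex_ray_def hex_cells_def)

lemma finite_hex_ray: "finite (hex_ray d j a)"
  using finite_subset[OF hex_ray_subset finite_hex_cells] .

lemma card_inj_interval:
  assumes "inj f" "lo \<le> hi + 1"
  shows "int (card (f ` {lo..hi :: int})) = hi - lo + 1"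
  using assms by (simp add: card_image inj_on_subset)

text \<open>Each ray is an interval of cells, parametrised injectively by one coordinate.\<close>
lemma card_hex_ray:
  assumes a: "\<bar>a\<bar> \<le> hex_half d" and j: "j \<in> {1, 2, 3}"
  shows "int (card (hex_ray d j a)) = 2 * hex_half d + 1 - \<bar>a\<bar>"
proof -
  let ?h = "hex_half d"
  let ?lo = "max (- ?h) (- ?h - a)" and ?hi = "min ?h (?h - a)"
  have length: "?lo \<le> ?hi + 1" "?hi - ?lo + 1 = 2 * ?h + 1 - \<bar>a\<bar>"
    using a by (cases "a < 0") (auto simp: min_def max_def)
  let ?lo' = "max (- ?h) (a - ?h)" and ?hi' = "min ?h (a + ?h)"
  have length': "?lo' \<le> ?hi' + 1" "?hi' - ?lo' + 1 = 2 * ?h + 1 - \<bar>a\<bar>"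
    using a by (cases "a < 0") (auto simp: min_def max_def)
  from j consider "j = 1" | "j = 2" | "j = 3" by auto
  then show ?thesis
  proof cases
    case 1
    then have "hex_ray d j a = (\<lambda>t. (a, t)) ` {?lo..?hi}"
      using a by (auto simp: hex_ray_def hex_cells_def image_iff)
    moreover have "inj (\<lambda>t::int. (a, t))" by (auto simp: inj_def)
    ultimately show ?thesis using card_inj_interval[OF _ length(1)] length(2) by metis
  next
    case 2
    then have "hex_ray d j a = (\<lambda>t. (t, a)) ` {?lo..?hi}"
      using a by (auto simp: hex_ray_def hex_cells_def image_iff)
    moreover have "inj (\<lambda>t::int. (t, a))" by (auto simp: inj_def)
    ultimately show ?thesis using card_inj_interval[OF _ length(1)] length(2) by metis
  next
    case 3
    then have "hex_ray d j a = (\<lambda>t. (t, a - t)) ` {?lo'..?hi'}"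
      using a by (auto simp: hex_ray_def hex_cells_def image_iff)
    moreover have "inj (\<lambda>t::int. (t, a - t))" by (auto simp: inj_def)
    ultimately show ?thesis using card_inj_interval[OF _ length'(1)] length'(2) by metis
  qed
qed

lemma sum_abs_int: "(\<Sum>a\<in>{- int n..int n}. \<bar>a\<bar>) = int n * (int n + 1)"
proof (induction n)
  case (Suc n)
  have "{- int (Suc n)..int (Suc n)} = insert (- int (Suc n)) (insert (int (Suc n)) {- int n..int n})"
    by auto
  with Suc show ?case by (simp add: algebra_simps)
qed simp

text \<open>Counting the cells row by row (direction 1) gives the centred hexagonal number.\<close>
lemma card_hex_cells:
  assumes "hex_half d \<ge> 0"
  shows "int (card (hex_cells d)) = 3 * (hex_half d)\<^sup>2 + 3 * hex_half d + 1"
proof -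
  let ?h = "hex_half d"
  obtain n where n: "?h = int n" using assms nonneg_int_cases by metis
  have "hex_cells d = (\<Union>a\<in>{- ?h..?h}. hex_ray d 1 a)"
    by (auto simp: hex_cells_def hex_ray_def)
  also have "card \<dots> = (\<Sum>a\<in>{- ?h..?h}. card (hex_ray d 1 a))"
  proof (rule card_UN_disjoint)
    show "\<forall>a\<in>{- ?h..?h}. finite (hex_ray d 1 a)" using finite_hex_ray by blast
  qed (auto simp: hex_ray_def)
  finally have "card (hex_cells d) = (\<Sum>a\<in>{- ?h..?h}. card (hex_ray d 1 a))" .
  then have "int (card (hex_cells d)) = (\<Sum>a\<in>{- ?h..?h}. int (card (hex_ray d 1 a)))"
    by simp
  also have "\<dots> = (\<Sum>a\<in>{- ?h..?h}. 2 * ?h + 1 - \<bar>a\<bar>)"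
    by (intro sum.cong refl card_hex_ray) auto
  also have "\<dots> = 3 * ?h\<^sup>2 + 3 * ?h + 1"
    unfolding sum_subtractf n sum_abs_int by (simp add: power2_eq_square algebra_simps)
  finally show ?thesis .
qed

lemma hex_ray_system:
  assumes "d \<ge> 1"
  shows "ray_system (hex_cells d) (hex_rays d) (\<lambda>r. hex_ray d (fst r) (snd r)) 3"
proof
  have "(0, 0) \<in> hex_cells d"
    using assms by (simp add: hex_cells_def hex_half_def)
  then show "hex_cells d \<noteq> {}" by blast
  show "card {r \<in> hex_rays d. c \<in> hex_ray d (fst r) (snd r)} = 3" if "c \<in> hex_cells d" for c
    unfolding hex_rays_through[OF that] by simp
qed (auto simp: finite_hex_cells hex_ray_subset hex_rays_def)

lemma real_card_hex_ray:
  assumes "r \<in> hex_rays d"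
  shows "real (card (hex_ray d (fst r) (snd r))) = of_int (2 * hex_half d + 1 - \<bar>snd r\<bar>)"
proof -
  have "int (card (hex_ray d (fst r) (snd r))) = 2 * hex_half d + 1 - \<bar>snd r\<bar>"
    by (rule card_hex_ray) (use assms in \<open>auto simp: hex_rays_def\<close>)
  then show ?thesis
    by (metis of_int_of_nat_eq)
qed

text \<open>The shortest rays are the six boundary rays, with \<open>h + 1 = (d + 1) / 2\<close> cells each.\<close>
lemma shortest_ray_ratio:
  assumes h: "hex_half d \<ge> 1"
  shows "Min ((\<lambda>r. real (card (hex_ray d (fst r) (snd r))) / real (card (hex_cells d))) ` hex_rays d)
      = (hex_half d + 1) / real (card (hex_cells d))"
proof (rule Min_eqI)
  have "int (card (hex_cells d)) > 0"
    using h by (simp add: card_hex_cells add_pos_nonneg)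
  then have N: "real (card (hex_cells d)) > 0" by simp
  fix y assume "y \<in> (\<lambda>r. real (card (hex_ray d (fst r) (snd r))) / real (card (hex_cells d))) ` hex_rays d"
  then obtain r where r: "r \<in> hex_rays d"
      "y = real (card (hex_ray d (fst r) (snd r))) / real (card (hex_cells d))"
    by blast
  then have "\<bar>snd r\<bar> \<le> hex_half d" by (auto simp: hex_rays_def)
  then show "(hex_half d + 1) / real (card (hex_cells d)) \<le> y"
    using r N by (simp add: real_card_hex_ray divide_right_mono)
next
  have "(1, hex_half d) \<in> hex_rays d" using h by (simp add: hex_rays_def)
  moreover have "real_of_int (hex_half d + 1) = real (card (hex_ray d 1 (hex_half d)))"
    using real_card_hex_ray[OF calculation] h by simp
  ultimately show "(hex_half d + 1) / real (card (hex_cells d))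
      \<in> (\<lambda>r. real (card (hex_ray d (fst r) (snd r))) / real (card (hex_cells d))) ` hex_rays d"
    by force
qed (simp add: hex_rays_def)

text \<open>With \<open>d = 2h + 1\<close>: \<open>(h + 1) / (3h\<^sup>2 + 3h + 1) = 2 (d + 1) / (3d\<^sup>2 + 1)\<close>.\<close>
lemma pbar_eq:
  assumes "odd d" "d \<ge> 3"
  shows "pbar d = 1 - 2 * (real d + 1) / (3 * (real d)\<^sup>2 + 1)"
proof -
  define h :: real where "h = of_int (hex_half d)"
  have h: "h \<ge> 1" "real d = 2 * h + 1"
    using hex_half_odd[OF assms] by (simp_all add: h_def)
  have "real_of_int (int (card (hex_cells d))) = of_int (3 * (hex_half d)\<^sup>2 + 3 * hex_half d + 1)"
    using card_hex_cells hex_half_odd[OF assms] by simp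
  then have card: "real (card (hex_cells d)) = 3 * h\<^sup>2 + 3 * h + 1"
    by (simp add: h_def)
  have "2 * (real d + 1) / (3 * (real d)\<^sup>2 + 1) = (4 * (h + 1)) / (4 * (3 * h\<^sup>2 + 3 * h + 1))"
    using h(2) by (simp add: power2_eq_square algebra_simps)
  also have "\<dots> = (h + 1) / real (card (hex_cells d))"
    unfolding card by (rule mult_divide_mult_cancel_left) simp
  finally show ?thesis
    using shortest_ray_ratio hex_half_odd(1)[OF assms] by (simp add: pbar_def h_def)
qed

lemma pbar_range:
  assumes "odd d" "d \<ge> 3"
  shows "0 \<le> pbar d" "pbar d < 1"
proof -
  have "real d \<ge> 3" using assms by simp
  then have "3 * real d \<le> (real d)\<^sup>2"
    by (simp add: power2_eq_square)
  with \<open>real d \<ge> 3\<close> have "0 < 2 * (real d + 1) / (3 * (real d)\<^sup>2 + 1)"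
      "2 * (real d + 1) / (3 * (real d)\<^sup>2 + 1) \<le> 1"
    by (simp_all add: divide_le_eq_1)
  then show "0 \<le> pbar d" "pbar d < 1"
    unfolding pbar_eq[OF assms] by linarith+
qed

lemma hex_miss_le_pbar:
  assumes "r \<in> hex_rays d"
  shows "1 - real (card (hex_ray d (fst r) (snd r))) / real (card (hex_cells d)) \<le> pbar d"
proof -
  have "Min ((\<lambda>r. real (card (hex_ray d (fst r) (snd r))) / real (card (hex_cells d))) ` hex_rays d)
      \<le> real (card (hex_ray d (fst r) (snd r))) / real (card (hex_cells d))"
    using assms by (intro Min_le) (auto simp: hex_rays_def)
  then show ?thesis
    unfolding pbar_def by simp
qed

text \<open>The main result: the ray system bound with \<open>t = 3\<close> and \<open>p = pbar d\<close>.\<close>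
theorem proposition3p5:
  fixes d k :: nat and \<delta> :: real
  assumes "odd d" and "d \<ge> 3" and "k \<ge> 1" and "\<delta> > 0"
  shows "pbar d = 1 - 2 * (real d + 1) / (3 * (real d)\<^sup>2 + 1)
    \<and> measure_pmf.prob (draw_pmf d k) {\<omega>. \<bar>zero_count d k \<omega> - expected_zeros d k\<bar> \<ge> \<delta>}
        \<le> 2 * exp (- ((1 - pbar d ^ 2) / (18 * (1 - pbar d ^ (2 * k)))) * \<delta>\<^sup>2)"
proof -
  interpret hex: ray_system "hex_cells d" "hex_rays d" "\<lambda>r. hex_ray d (fst r) (snd r)" 3
    using hex_ray_system assms(2) by simp
  have p: "0 \<le> pbar d" "pbar d < 1"
    using pbar_range[OF assms(1,2)] .
  have miss: "hex.miss r \<le> pbar d" if "r \<in> hex_rays d" for r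
    using hex_miss_le_pbar[OF that] by (simp add: hex.miss_def)
  have model: "draw_pmf d k = hex.draws (0, 0) k" "zero_count d k = hex.zeros (hex_rays d) k"
      "expected_zeros d k = hex.mean (hex_rays d) k"
    by (simp_all add: fun_eq_iff draw_pmf_def hex.draws_def zero_count_def zero_meas_def
        hex.zeros_def expected_zeros_def hex.mean_def hex.miss_def)
  have "pbar d ^ 2 < 1"
    using p by (simp add: abs_square_less_1)
  then have "(\<Sum>j<k. (pbar d ^ 2) ^ j) = (1 - pbar d ^ (2 * k)) / (1 - pbar d ^ 2)"
    by (simp add: sum_gp_strict power_mult)
  then have exponent: "- \<delta>\<^sup>2 / (2 * (real 3)\<^sup>2 * (\<Sum>j<k. (pbar d ^ 2) ^ j))
      = - ((1 - pbar d ^ 2) / (18 * (1 - pbar d ^ (2 * k)))) * \<delta>\<^sup>2"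
    by simp
  show ?thesis
    using pbar_eq[OF assms(1,2)] hex.zeros_concentration[OF p(1) miss, of k \<delta> "(0, 0)"] assms(3,4)
    unfolding model exponent by simp
qed

end
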